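(* Every nonempty, acyclic and connected extended representation graph for $E$ that does not contain a source is isomorphic to $(F_x,\phi_x)$ for some $x\in X^\infty$.
   Context: $E=(E^0,E^1,s,r)$ is a row-finite directed graph; for each vertex $v$ emitting an edge a fixed edge $e^v\in s^{-1}(v)$ is called special, others nonspecial. The double graph $E_d$ has vertices $E^0$ and edges $e$ (real) and $e^*$ (ghost) for $e\in E^1$, with $s_d(e)=s(e),r_d(e)=r(e),s_d(e^* )=r(e),r_d(e^* )=s(e)$. For a path $p=e_1\dots e_n$ set $p^*=e_n^*\dots e_1^*$. The set $X$ of (finite) basis paths consists of the paths in $E_d$: vertices; $p,p^*$ for paths $p$ of length $\ge1$ in $E$; $pq^*$ with $p=e_1\dots e_k,q=f_1\dots f_n$ of length $\ge1$ in $E$, $r(p)=r(q)$, and $e_k\ne f_n$ or $e_k=f_n$ nonspecial. $X^\infty$ is the set of left-infinite words $x=\dots x_3x_2x_1$ of edges of $E_d$ such that each $x_n\dots x_1$ is a basis path. An extended representation graph for $E$ is a pair $(F,\phi)$, $F$ a directed graph, $\phi:F\to E_d$ a graph homomorphism, such that for every $w\in F^0$: (i) $w$ is a source or receives exactly one edge $f_w$; (ii) if $w$ is a source or $\phi(f_w)$ is a nonspecial real edge, $\phi$ maps $s^{-1}(w)$ bijectively onto $s_d^{-1}(\phi(w))$; (iii) if $\phi(f_w)$ is a special real edge, onto $s_d^{-1}(\phi(w))\setminus\{\phi(f_w)^*\}$; (iv) if $\phi(f_w)$ is a ghost edge, onto the ghost edges in $s_d^{-1}(\phi(w))$. An isomorphism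 $(F,\phi)\to(G,\psi)$ is a graph isomorphism $\alpha$ with $\psi\circ\alpha=\phi$. $F$ is connected if any two vertices are joined by a path when edge directions are ignored; acyclic if it has no cycle; nonempty if $F^0\neq\emptyset$. $(F_x,\phi_x)$ for $x=\dots x_2x_1\in X^\infty$: for $i\in\mathbb N$, $X_i$ = basis paths $y=y_1\dots y_n$, $n\ge1$, with $x_iy_1$ a basis path and $y_1\ne x_{i-1}$ if $i\ge2$. Vertices $w_i$ ($i\in\mathbb N$), $w_{i,y}$ ($y\in X_i$), all distinct; edges $f_i$ from $w_{i+1}$ to $w_i$, and $f_{i,y}$ to $w_{i,y}$ from $w_i$ if $|y|=1$, from $w_{i,y_1\dots y_{n-1}}$ if $n\ge2$; $\phi_x(w_i)=r_d(x_i)$, $\phi_x(w_{i,y})=r_d(y)$, $\phi_x(f_i)=x_i$, $\phi_x(f_{i,y})=$ last edge of $y$. *)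

theory Defs
  imports Main
begin

record ('v,'e) dgraph =
  verts :: "'v set"
  edges :: "'e set"
  src   :: "'e \<Rightarrow> 'v"
  rng   :: "'e \<Rightarrow> 'v"

definition wf_graph :: "('v,'e) dgraph \<Rightarrow> bool" where
  "wf_graph G \<longleftrightarrow> (\<forall>e\<in>edges G. src G e \<in> verts G \<and> rng G e \<in> verts G)"

definition row_finite_graph :: "('v,'e) dgraph \<Rightarrow> bool" where
  "row_finite_graph G \<longleftrightarrow> wf_graph G \<and>
     (\<forall>v\<in>verts G. finite {e\<in>edges G. src G e = v})"

definition special_choice :: "('v,'e) dgraph \<Rightarrow> ('v \<Rightarrow> 'e) \<Rightarrow> bool" where
  "special_choice G sp \<longleftrightarrow>
     (\<forall>v\<in>verts G. (\<exists>e\<in>edges G. src G e = v) \<longrightarrow> sp v \<in> edges G \<and> src G (sp v) = v)"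

definition special :: "('v,'e) dgraph \<Rightarrow> ('v \<Rightarrow> 'e) \<Rightarrow> 'e \<Rightarrow> bool" where
  "special G sp e \<longleftrightarrow> sp (src G e) = e"

datatype 'e dedge = Real 'e | Ghost 'e

fun is_ghost :: "'e dedge \<Rightarrow> bool" where
  "is_ghost (Real e) = False" | "is_ghost (Ghost e) = True"

definition double_graph :: "('v,'e) dgraph \<Rightarrow> ('v, 'e dedge) dgraph" where
  "double_graph G = \<lparr> verts = verts G,
     edges = Real ` edges G \<union> Ghost ` edges G,
     src = (\<lambda>d. case d of Real e \<Rightarrow> src G e | Ghost e \<Rightarrow> rng G e),
     rng = (\<lambda>d. case d of Real e \<Rightarrow> rng G e | Ghost e \<Rightarrow> src G e) \<rparr>"

definition is_path :: "('v,'e) dgraph \<Rightarrow> 'e list \<Rightarrow> bool" where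
  "is_path G p \<longleftrightarrow> p \<noteq> [] \<and> set p \<subseteq> edges G \<and>
     (\<forall>i. Suc i < length p \<longrightarrow> rng G (p ! i) = src G (p ! Suc i))"

definition ghost_path :: "'e list \<Rightarrow> 'e dedge list" where
  "ghost_path p = rev (map Ghost p)"

text \<open>Basis paths of length \<ge> 1 (vertices, the basis paths of length 0,
  are never needed below).\<close>
definition basis_path :: "('v,'e) dgraph \<Rightarrow> ('v \<Rightarrow> 'e) \<Rightarrow> 'e dedge list \<Rightarrow> bool" where
  "basis_path G sp w \<longleftrightarrow>
     (\<exists>p. is_path G p \<and> w = map Real p) \<or>
     (\<exists>p. is_path G p \<and> w = ghost_path p) \<or>
     (\<exists>p q. is_path G p \<and> is_path G q \<and> rng G (last p) = rng G (last q) \<and>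
        (last p \<noteq> last q \<or> \<not> special G sp (last p)) \<and>
        w = map Real p @ ghost_path q)"

text \<open>Left-infinite words x = ... x_3 x_2 x_1 are functions on the indices
  1,2,3,...; the value at index 0 is irrelevant.\<close>
definition Xinf :: "('v,'e) dgraph \<Rightarrow> ('v \<Rightarrow> 'e) \<Rightarrow> (nat \<Rightarrow> 'e dedge) set" where
  "Xinf G sp = {x. \<forall>n\<ge>1. basis_path G sp (rev (map x [1..<Suc n]))}"

definition graph_hom :: "('a,'b) dgraph \<Rightarrow> ('c,'d) dgraph \<Rightarrow> ('a \<Rightarrow> 'c) \<Rightarrow> ('b \<Rightarrow> 'd) \<Rightarrow> bool" where
  "graph_hom F G \<phi>v \<phi>e \<longleftrightarrow>
     (\<forall>w\<in>verts F. \<phi>v w \<in> verts G) \<and>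
     (\<forall>f\<in>edges F. \<phi>e f \<in> edges G \<and> src G (\<phi>e f) = \<phi>v (src F f) \<and> rng G (\<phi>e f) = \<phi>v (rng F f))"

definition is_source :: "('a,'b) dgraph \<Rightarrow> 'a \<Rightarrow> bool" where
  "is_source F w \<longleftrightarrow> \<not> (\<exists>f\<in>edges F. rng F f = w)"

definition in_edge :: "('a,'b) dgraph \<Rightarrow> 'a \<Rightarrow> 'b" where
  "in_edge F w = (THE f. f \<in> edges F \<and> rng F f = w)"

definition ext_rep_graph ::
  "('v,'e) dgraph \<Rightarrow> ('v \<Rightarrow> 'e) \<Rightarrow> ('a,'b) dgraph \<Rightarrow> ('a \<Rightarrow> 'v) \<Rightarrow> ('b \<Rightarrow> 'e dedge) \<Rightarrow> bool" where
  "ext_rep_graph G sp F \<phi>v \<phi>e \<longleftrightarrow>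
     wf_graph F \<and> graph_hom F (double_graph G) \<phi>v \<phi>e \<and>
     (\<forall>w\<in>verts F.
        (is_source F w \<or> (\<exists>!f. f \<in> edges F \<and> rng F f = w)) \<and>
        (let out = {f\<in>edges F. src F f = w};
             dout = {d\<in>edges (double_graph G). src (double_graph G) d = \<phi>v w} in
         (if is_source F w then bij_betw \<phi>e out dout
          else (case \<phi>e (in_edge F w) of
                  Real e \<Rightarrow> (if special G sp e then bij_betw \<phi>e out (dout - {Ghost e})
                             else bij_betw \<phi>e out dout)
                | Ghost e \<Rightarrow> bij_betw \<phi>e out {d\<in>dout. is_ghost d}))))"

definition edge_rel :: "('a,'b) dgraph \<Rightarrow> ('a \<times> 'a) set" where
  "edge_rel F = {(src F f, rng F f) | f. f \<in> edges F}"

definition connected_graph :: "('a,'b) dgraph \<Rightarrow> bool" where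
  "connected_graph F \<longleftrightarrow>
     (\<forall>u\<in>verts F. \<forall>v\<in>verts F. (u, v) \<in> (edge_rel F \<union> (edge_rel F)\<inverse>)\<^sup>*)"

definition acyclic_graph :: "('a,'b) dgraph \<Rightarrow> bool" where
  "acyclic_graph F \<longleftrightarrow> acyclic (edge_rel F)"

definition rep_iso ::
  "('a,'b) dgraph \<Rightarrow> ('a \<Rightarrow> 'v) \<Rightarrow> ('b \<Rightarrow> 'd) \<Rightarrow>
   ('c,'g) dgraph \<Rightarrow> ('c \<Rightarrow> 'v) \<Rightarrow> ('g \<Rightarrow> 'd) \<Rightarrow> bool" where
  "rep_iso F \<phi>v \<phi>e H \<psi>v \<psi>e \<longleftrightarrow>
     (\<exists>\<alpha>v \<alpha>e. bij_betw \<alpha>v (verts F) (verts H) \<and> bij_betw \<alpha>e (edges F) (edges H) \<and>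
        (\<forall>f\<in>edges F. src H (\<alpha>e f) = \<alpha>v (src F f) \<and> rng H (\<alpha>e f) = \<alpha>v (rng F f)) \<and>
        (\<forall>w\<in>verts F. \<psi>v (\<alpha>v w) = \<phi>v w) \<and>
        (\<forall>f\<in>edges F. \<psi>e (\<alpha>e f) = \<phi>e f))"

datatype 'e fx_vert = W nat | WY nat "'e dedge list"
datatype 'e fx_edge = FE nat | FEY nat "'e dedge list"

definition Xi :: "('v,'e) dgraph \<Rightarrow> ('v \<Rightarrow> 'e) \<Rightarrow> (nat \<Rightarrow> 'e dedge) \<Rightarrow> nat \<Rightarrow> 'e dedge list set" where
  "Xi G sp x i = {y. y \<noteq> [] \<and> basis_path G sp y \<and> basis_path G sp [x i, hd y] \<and>
                      (i \<ge> 2 \<longrightarrow> hd y \<noteq> x (i - 1))}"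

definition Fx :: "('v,'e) dgraph \<Rightarrow> ('v \<Rightarrow> 'e) \<Rightarrow> (nat \<Rightarrow> 'e dedge) \<Rightarrow> ('e fx_vert, 'e fx_edge) dgraph" where
  "Fx G sp x = \<lparr>
     verts = {W i | i. i \<ge> 1} \<union> {WY i y | i y. i \<ge> 1 \<and> y \<in> Xi G sp x i},
     edges = {FE i | i. i \<ge> 1} \<union> {FEY i y | i y. i \<ge> 1 \<and> y \<in> Xi G sp x i},
     src = (\<lambda>f. case f of FE i \<Rightarrow> W (Suc i)
                | FEY i y \<Rightarrow> (if length y = 1 then W i else WY i (butlast y))),
     rng = (\<lambda>f. case f of FE i \<Rightarrow> W i | FEY i y \<Rightarrow> WY i y) \<rparr>"

definition phiVx :: "('v,'e) dgraph \<Rightarrow> (nat \<Rightarrow> 'e dedge) \<Rightarrow> 'e fx_vert \<Rightarrow> 'v" where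
  "phiVx G x w = (case w of W i \<Rightarrow> rng (double_graph G) (x i)
                  | WY i y \<Rightarrow> rng (double_graph G) (last y))"

definition phiEx :: "(nat \<Rightarrow> 'e dedge) \<Rightarrow> 'e fx_edge \<Rightarrow> 'e dedge" where
  "phiEx x f = (case f of FE i \<Rightarrow> x i | FEY i y \<Rightarrow> last y)"

end

theory Submission
  imports Defs
begin

(* Every vertex of F receives exactly one edge, so following incoming edges backwards defines
   a parent map, and acyclicity makes the ancestors of a fixed vertex pairwise distinct. These
   ancestors form the spine w_1 <- w_2 <- ... of F_x, and the labels of their incoming edges
   form x. By connectivity every vertex u has an ancestor on the spine; at the least such
   depth the labels of the path from the spine down to u form a word y in X_i, minimality
   giving y_1 <> x_(i-1). Conversely, at every vertex the labels of the outgoing edges are exactly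
   the admissible successors of the label of the incoming edge, so every such y can be followed
   from the spine in exactly one way. *)

section \<open>Basis paths as admissible words\<close>

lemma double_graph_simps [simp]:
  "verts (double_graph E) = verts E"
  "src (double_graph E) (Real e) = src E e"
  "src (double_graph E) (Ghost e) = rng E e"
  "rng (double_graph E) (Real e) = rng E e"
  "rng (double_graph E) (Ghost e) = src E e"
  "Real e \<in> edges (double_graph E) \<longleftrightarrow> e \<in> edges E"
  "Ghost e \<in> edges (double_graph E) \<longleftrightarrow> e \<in> edges E"
  by (auto simp: double_graph_def)

lemma is_path_iff_successively:
  "is_path G p \<longleftrightarrow> p \<noteq> [] \<and> set p \<subseteq> edges G \<and> successively (\<lambda>e f. rng G e = src G f) p"
  by (simp add: is_path_def successively_conv_nth)

lemma ghost_path_snoc: "ghost_path (q @ [e]) = Ghost e # ghost_path q"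
  by (simp add: ghost_path_def)

lemma hd_ghost_path: "q \<noteq> [] \<Longrightarrow> hd (ghost_path q) = Ghost (last q)"
  by (simp add: ghost_path_def hd_rev last_map)

(* ab is a basis path of length two iff a and b are edges and admissible_pair E sp a b. *)
definition admissible_pair :: "('v,'e) dgraph \<Rightarrow> ('v \<Rightarrow> 'e) \<Rightarrow> 'e dedge \<Rightarrow> 'e dedge \<Rightarrow> bool" where
  "admissible_pair E sp a b \<longleftrightarrow>
     rng (double_graph E) a = src (double_graph E) b \<and> \<not> (is_ghost a \<and> \<not> is_ghost b) \<and>
     (\<forall>e. a = Real e \<and> b = Ghost e \<longrightarrow> \<not> special E sp e)"

definition admissible_word :: "('v,'e) dgraph \<Rightarrow> ('v \<Rightarrow> 'e) \<Rightarrow> 'e dedge list \<Rightarrow> bool" where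
  "admissible_word E sp w \<longleftrightarrow>
     w \<noteq> [] \<and> set w \<subseteq> edges (double_graph E) \<and> successively (admissible_pair E sp) w"

lemma admissible_word_singleton [simp]:
  "admissible_word E sp [a] \<longleftrightarrow> a \<in> edges (double_graph E)"
  by (simp add: admissible_word_def)

lemma admissible_word_Cons:
  "w \<noteq> [] \<Longrightarrow> admissible_word E sp (a # w) \<longleftrightarrow>
     a \<in> edges (double_graph E) \<and> admissible_pair E sp a (hd w) \<and> admissible_word E sp w"
  by (auto simp: admissible_word_def successively_Cons)

lemma admissible_word_snoc:
  "w \<noteq> [] \<Longrightarrow> admissible_word E sp (w @ [a]) \<longleftrightarrow>
     admissible_word E sp w \<and> a \<in> edges (double_graph E) \<and> admissible_pair E sp (last w) a"
  by (auto simp: admissible_word_def successively_append_iff)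

lemma admissible_word_map_Real: "is_path E p \<Longrightarrow> admissible_word E sp (map Real p)"
  by (auto simp: admissible_word_def is_path_iff_successively successively_map admissible_pair_def
      elim: successively_mono)

lemma admissible_word_ghost_path: "is_path E q \<Longrightarrow> admissible_word E sp (ghost_path q)"
  by (auto simp: admissible_word_def is_path_iff_successively ghost_path_def successively_map
      admissible_pair_def elim: successively_mono)

lemma basis_path_cases:
  assumes "basis_path E sp w"
  obtains (real) p where "is_path E p" "w = map Real p"
  | (ghost) q where "is_path E q" "w = ghost_path q"
  | (mixed) p q where "is_path E p" "is_path E q" "rng E (last p) = rng E (last q)"
      "last p \<noteq> last q \<or> \<not> special E sp (last p)" "w = map Real p @ ghost_path q"
  using assms unfolding basis_path_def by blast

lemma admissible_word_if_basis_path: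
  assumes "basis_path E sp w"
  shows "admissible_word E sp w"
  using assms
proof (cases rule: basis_path_cases)
  case (mixed p q)
  moreover have "p \<noteq> []" "q \<noteq> []"
    using mixed by (auto simp: is_path_def)
  ultimately show ?thesis
    using admissible_word_map_Real[of E p sp] admissible_word_ghost_path[of E q sp]
    by (auto simp: admissible_word_def successively_append_iff last_map hd_ghost_path
        admissible_pair_def)
qed (simp_all add: admissible_word_map_Real admissible_word_ghost_path)

lemma basis_path_singleton: "a \<in> edges (double_graph E) \<Longrightarrow> basis_path E sp [a]"
proof (cases a)
  case (Real e)
  moreover assume "a \<in> edges (double_graph E)"
  ultimately show ?thesis
    unfolding basis_path_def by (intro disjI1 exI[of _ "[e]"]) (simp add: is_path_def)
next
  case (Ghost e)
  moreover assume "a \<in> edges (double_graph E)"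
  ultimately show ?thesis
    unfolding basis_path_def by (intro disjI2 disjI1 exI[of _ "[e]"]) (simp add: is_path_def ghost_path_def)
qed

lemma basis_path_Cons:
  assumes w: "basis_path E sp w" and a: "a \<in> edges (double_graph E)" "admissible_pair E sp a (hd w)"
  shows "basis_path E sp (a # w)"
  using w
proof (cases rule: basis_path_cases)
  case (real p)
  moreover have "p \<noteq> []"
    using real by (simp add: is_path_def)
  ultimately obtain e where "a = Real e" "is_path E (e # p)"
    using a by (cases a) (auto simp: admissible_pair_def is_path_iff_successively successively_Cons hd_map)
  then show ?thesis
    using real unfolding basis_path_def by (intro disjI1 exI[of _ "e # p"]) simp
next
  case (ghost q)
  then have "q \<noteq> []"
    by (simp add: is_path_def)
  show ?thesis
  proof (cases a)
    case (Real e)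
    then have "is_path E [e]" "rng E e = rng E (last q)" "e \<noteq> last q \<or> \<not> special E sp e"
      using a ghost \<open>q \<noteq> []\<close> by (auto simp: is_path_def admissible_pair_def hd_ghost_path)
    then show ?thesis
      using ghost Real unfolding basis_path_def by (intro disjI2 exI[of _ "[e]"] exI[of _ q]) simp
  next
    case (Ghost e)
    then have "is_path E (q @ [e])"
      using a ghost \<open>q \<noteq> []\<close>
      by (auto simp: is_path_iff_successively successively_append_iff admissible_pair_def hd_ghost_path)
    then show ?thesis
      using ghost Ghost unfolding basis_path_def
      by (intro disjI2 disjI1 exI[of _ "q @ [e]"]) (simp add: ghost_path_snoc)
  qed
next
  case (mixed p q)
  moreover have "p \<noteq> []"
    using mixed by (simp add: is_path_def)
  ultimately obtain e where "a = Real e" "is_path E (e # p)"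
    using a by (cases a) (auto simp: admissible_pair_def is_path_iff_successively successively_Cons hd_map)
  then show ?thesis
    using mixed \<open>p \<noteq> []\<close> unfolding basis_path_def by (intro disjI2 exI[of _ "e # p"] exI[of _ q]) simp
qed

lemma basis_path_if_admissible_word: "admissible_word E sp w \<Longrightarrow> basis_path E sp w"
proof (induction w)
  case (Cons a w)
  then show ?case
    by (cases "w = []") (simp_all add: basis_path_singleton basis_path_Cons admissible_word_Cons)
qed (simp add: admissible_word_def)

theorem basis_path_iff_admissible_word: "basis_path E sp w \<longleftrightarrow> admissible_word E sp w"
  using admissible_word_if_basis_path basis_path_if_admissible_word by blast

lemma Xi_iff:
  "y \<in> Xi E sp x i \<longleftrightarrow>
     y \<noteq> [] \<and> admissible_word E sp (x i # y) \<and> (2 \<le> i \<longrightarrow> hd y \<noteq> x (i - 1))"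
  by (auto simp: Xi_def basis_path_iff_admissible_word admissible_word_Cons
      admissible_word_def[of E sp y] intro: subsetD[OF _ hd_in_set])

lemma in_XinfI:
  assumes "\<And>i. 1 \<le> i \<Longrightarrow> x i \<in> edges (double_graph E) \<and> admissible_pair E sp (x (Suc i)) (x i)"
  shows "x \<in> Xinf E sp"
proof -
  have "successively (admissible_pair E sp) (rev (map x [1..<Suc n]))" for n
    unfolding successively_rev successively_map
    using assms by (simp add: successively_conv_nth del: upt_Suc)
  then show ?thesis
    using assms by (auto simp: Xinf_def basis_path_iff_admissible_word admissible_word_def
        simp del: upt_Suc)
qed

section \<open>Graphs in which every vertex receives exactly one edge\<close>

definition in_degree_one :: "('a,'b) dgraph \<Rightarrow> bool" where
  "in_degree_one G \<longleftrightarrow> (\<forall>w\<in>verts G. \<exists>!f. f \<in> edges G \<and> rng G f = w)"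

lemma in_edge:
  assumes "in_degree_one G" "w \<in> verts G"
  shows "in_edge G w \<in> edges G" "rng G (in_edge G w) = w"
  using theI'[of "\<lambda>f. f \<in> edges G \<and> rng G f = w"] assms
  by (auto simp: in_degree_one_def in_edge_def)

lemma in_edge_rng:
  assumes "in_degree_one G" "wf_graph G" "f \<in> edges G"
  shows "in_edge G (rng G f) = f"
  unfolding in_edge_def using assms
  by (intro the1_equality) (auto simp: in_degree_one_def wf_graph_def)

(* Edges correspond through their targets, so the vertex bijection determines the isomorphism. *)
lemma rep_iso_if_vertex_bij:
  assumes H: "wf_graph H" "in_degree_one H" and F: "wf_graph F" "in_degree_one F"
    and bij: "bij_betw \<beta> (verts H) (verts F)"
    and src: "\<And>f. f \<in> edges H \<Longrightarrow> src F (in_edge F (\<beta> (rng H f))) = \<beta> (src H f)"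
    and vlabel: "\<And>w. w \<in> verts H \<Longrightarrow> \<phi>v (\<beta> w) = \<psi>v w"
    and elabel: "\<And>f. f \<in> edges H \<Longrightarrow> \<phi>e (in_edge F (\<beta> (rng H f))) = \<psi>e f"
  shows "rep_iso F \<phi>v \<phi>e H \<psi>v \<psi>e"
proof -
  define \<alpha>v where "\<alpha>v = inv_into (verts H) \<beta>"
  define \<alpha>e where "\<alpha>e g = in_edge H (\<alpha>v (rng F g))" for g
  have \<alpha>v: "bij_betw \<alpha>v (verts F) (verts H)"
    unfolding \<alpha>v_def using bij by (rule bij_betw_inv_into)
  have \<beta>_\<alpha>v: "\<beta> (\<alpha>v w) = w" if "w \<in> verts F" for w
    using bij that unfolding \<alpha>v_def by (simp add: bij_betw_inv_into_right)
  have \<alpha>v_\<beta>: "\<alpha>v (\<beta> w) = w" if "w \<in> verts H" for w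
    using bij that unfolding \<alpha>v_def by (simp add: bij_betw_inv_into_left)
  have \<alpha>e: "\<alpha>e g \<in> edges H" "rng H (\<alpha>e g) = \<alpha>v (rng F g)" if "g \<in> edges F" for g
    using in_edge[OF H(2)] bij_betwE[OF \<alpha>v] F(1) that unfolding \<alpha>e_def wf_graph_def by auto
  have in_edge_\<alpha>e: "in_edge F (\<beta> (rng H (\<alpha>e g))) = g" if "g \<in> edges F" for g
    using \<alpha>e \<beta>_\<alpha>v in_edge_rng[OF F(2,1)] F(1) that by (simp add: wf_graph_def)
  have "bij_betw \<alpha>e (edges F) (edges H)"
  proof (rule bij_betw_byWitness[where f' = "\<lambda>f. in_edge F (\<beta> (rng H f))"])
    show "\<forall>f\<in>edges H. \<alpha>e (in_edge F (\<beta> (rng H f))) = f"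
      using in_edge[OF F(2)] bij_betwE[OF bij] \<alpha>v_\<beta> in_edge_rng[OF H(2,1)] H(1)
      by (simp add: \<alpha>e_def wf_graph_def)
    show "(\<lambda>f. in_edge F (\<beta> (rng H f))) ` edges H \<subseteq> edges F"
      using in_edge[OF F(2)] bij_betwE[OF bij] H(1) by (auto simp: wf_graph_def)
  qed (use \<alpha>e in_edge_\<alpha>e in auto)
  moreover have "src H (\<alpha>e g) = \<alpha>v (src F g)" if "g \<in> edges F" for g
    using src[OF \<alpha>e(1)] in_edge_\<alpha>e \<alpha>v_\<beta> \<alpha>e(1) H(1) that by (metis wf_graph_def)
  moreover have "\<psi>e (\<alpha>e g) = \<phi>e g" if "g \<in> edges F" for g
    using elabel[OF \<alpha>e(1)] in_edge_\<alpha>e that by simp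
  moreover have "\<psi>v (\<alpha>v w) = \<phi>v w" if "w \<in> verts F" for w
    using vlabel[of "\<alpha>v w"] \<beta>_\<alpha>v bij_betwE[OF \<alpha>v] that by simp
  ultimately show ?thesis
    unfolding rep_iso_def using \<alpha>v \<alpha>e(2)
    by (intro exI[of _ \<alpha>v] exI[of _ \<alpha>e]) auto
qed

lemma Fx_simps [simp]:
  "W i \<in> verts (Fx E sp x) \<longleftrightarrow> 1 \<le> i"
  "WY i y \<in> verts (Fx E sp x) \<longleftrightarrow> 1 \<le> i \<and> y \<in> Xi E sp x i"
  "FE i \<in> edges (Fx E sp x) \<longleftrightarrow> 1 \<le> i"
  "FEY i y \<in> edges (Fx E sp x) \<longleftrightarrow> 1 \<le> i \<and> y \<in> Xi E sp x i"
  "src (Fx E sp x) (FE i) = W (Suc i)"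
  "src (Fx E sp x) (FEY i y) = (if length y = 1 then W i else WY i (butlast y))"
  "rng (Fx E sp x) (FE i) = W i"
  "rng (Fx E sp x) (FEY i y) = WY i y"
  by (auto simp: Fx_def)

lemma butlast_in_Xi:
  assumes "y \<in> Xi E sp x i" "length y \<noteq> 1"
  shows "butlast y \<in> Xi E sp x i"
proof -
  obtain z a where y: "y = z @ [a]"
    using assms(1) by (cases y rule: rev_cases) (auto simp: Xi_iff)
  with assms(2) have "z \<noteq> []"
    by auto
  then show ?thesis
    using assms(1) admissible_word_snoc[of "x i # z" E sp a]
    by (auto simp: y Xi_iff)
qed

lemma wf_graph_Fx: "wf_graph (Fx E sp x)"
  unfolding wf_graph_def
proof
  fix f assume "f \<in> edges (Fx E sp x)"
  then show "src (Fx E sp x) f \<in> verts (Fx E sp x) \<and> rng (Fx E sp x) f \<in> verts (Fx E sp x)"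
    by (cases f) (auto simp: butlast_in_Xi)
qed

lemma in_degree_one_Fx: "in_degree_one (Fx E sp x)"
  unfolding in_degree_one_def
proof
  fix w assume w: "w \<in> verts (Fx E sp x)"
  have "rng (Fx E sp x) f = w \<longleftrightarrow> f = (case w of W i \<Rightarrow> FE i | WY i y \<Rightarrow> FEY i y)" for f
    by (cases f; cases w) auto
  then show "\<exists>!f. f \<in> edges (Fx E sp x) \<and> rng (Fx E sp x) f = w"
    using w by (cases w) auto
qed

locale sourceless_rep_graph =
  fixes E :: "('v,'e) dgraph" and sp :: "'v \<Rightarrow> 'e"
    and F :: "('a,'b) dgraph" and \<phi>v :: "'a \<Rightarrow> 'v" and \<phi>e :: "'b \<Rightarrow> 'e dedge"
  assumes ext_rep: "ext_rep_graph E sp F \<phi>v \<phi>e"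
    and no_source: "\<forall>w\<in>verts F. \<not> is_source F w"
begin

lemma wf_graph_F: "wf_graph F"
  using ext_rep by (simp add: ext_rep_graph_def)

lemma in_degree_one_F: "in_degree_one F"
  using ext_rep no_source unfolding ext_rep_graph_def in_degree_one_def by blast

lemmas in_edge_F = in_edge[OF in_degree_one_F]
lemmas in_edge_rng_F = in_edge_rng[OF in_degree_one_F wf_graph_F]

abbreviation in_label :: "'a \<Rightarrow> 'e dedge" where
  "in_label w \<equiv> \<phi>e (in_edge F w)"

definition parent :: "'a \<Rightarrow> 'a" where
  "parent w = src F (in_edge F w)"

lemma parent_in_verts: "w \<in> verts F \<Longrightarrow> parent w \<in> verts F"
  using in_edge_F wf_graph_F by (simp add: parent_def wf_graph_def)

lemma funpow_parent_in_verts: "w \<in> verts F \<Longrightarrow> (parent ^^ k) w \<in> verts F"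
  by (induction k) (simp_all add: parent_in_verts)

lemma parent_rng: "f \<in> edges F \<Longrightarrow> parent (rng F f) = src F f"
  by (simp add: parent_def in_edge_rng_F)

lemma rng_in_label: "w \<in> verts F \<Longrightarrow> rng (double_graph E) (in_label w) = \<phi>v w"
  using ext_rep in_edge_F unfolding ext_rep_graph_def graph_hom_def by auto

lemma bij_betw_out_edges:
  assumes w: "w \<in> verts F"
  shows "bij_betw \<phi>e {f \<in> edges F. src F f = w}
           {l \<in> edges (double_graph E). admissible_pair E sp (in_label w) l}"
proof -
  let ?out = "{f \<in> edges F. src F f = w}"
  let ?dout = "{d \<in> edges (double_graph E). src (double_graph E) d = \<phi>v w}"
  have "\<not> is_source F w"
    using no_source w by blast
  then have "case in_label w of
      Real e \<Rightarrow> if special E sp e then bij_betw \<phi>e ?out (?dout - {Ghost e}) else bij_betw \<phi>e ?out ?dout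
    | Ghost e \<Rightarrow> bij_betw \<phi>e ?out {d \<in> ?dout. is_ghost d}"
    using ext_rep w unfolding ext_rep_graph_def Let_def by auto
  moreover have "{l \<in> edges (double_graph E). admissible_pair E sp (in_label w) l} =
    (case in_label w of
      Real e \<Rightarrow> if special E sp e then ?dout - {Ghost e} else ?dout
    | Ghost e \<Rightarrow> {d \<in> ?dout. is_ghost d})"
    using rng_in_label[OF w] by (cases "in_label w") (auto simp: admissible_pair_def)
  ultimately show ?thesis
    by (auto split: dedge.splits if_splits)
qed

lemma label_admissible:
  assumes "g \<in> edges F"
  shows "\<phi>e g \<in> edges (double_graph E) \<and> admissible_pair E sp (in_label (src F g)) (\<phi>e g)"
  using bij_betwE[OF bij_betw_out_edges] wf_graph_F assms by (auto simp: wf_graph_def)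

lemma in_label_admissible:
  "w \<in> verts F \<Longrightarrow>
     in_label w \<in> edges (double_graph E) \<and> admissible_pair E sp (in_label (parent w)) (in_label w)"
  using label_admissible[OF in_edge_F(1)] by (simp add: parent_def)

definition out_edge :: "'a \<Rightarrow> 'e dedge \<Rightarrow> 'b" where
  "out_edge w l = (SOME g. g \<in> edges F \<and> src F g = w \<and> \<phi>e g = l)"

lemma out_edge:
  assumes "w \<in> verts F" "l \<in> edges (double_graph E)" "admissible_pair E sp (in_label w) l"
  shows "out_edge w l \<in> edges F \<and> src F (out_edge w l) = w \<and> \<phi>e (out_edge w l) = l"
proof -
  have "\<exists>g. g \<in> edges F \<and> src F g = w \<and> \<phi>e g = l"
    using bij_betw_out_edges[OF assms(1)] assms(2,3) by (force simp: bij_betw_def)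
  then show ?thesis
    unfolding out_edge_def by (rule someI_ex)
qed

lemma out_edge_label:
  assumes g: "g \<in> edges F"
  shows "out_edge (src F g) (\<phi>e g) = g"
proof -
  have w: "src F g \<in> verts F"
    using wf_graph_F g by (simp add: wf_graph_def)
  show ?thesis
    using out_edge[OF w] label_admissible[OF g] bij_betw_out_edges[OF w] g
    by (auto simp: bij_betw_def inj_on_def)
qed

lemma eq_if_parent_eq_in_label_eq:
  assumes "u \<in> verts F" "v \<in> verts F" "parent u = parent v" "in_label u = in_label v"
  shows "u = v"
  using out_edge_label[OF in_edge_F(1)[OF assms(1)]] out_edge_label[OF in_edge_F(1)[OF assms(2)]]
    in_edge_F(2) assms unfolding parent_def by metis

lemma out_edge_target:
  assumes "w \<in> verts F" "l \<in> edges (double_graph E)" "admissible_pair E sp (in_label w) l"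
  shows "rng F (out_edge w l) \<in> verts F \<and> in_label (rng F (out_edge w l)) = l \<and>
    parent (rng F (out_edge w l)) = w"
  using out_edge[OF assms] wf_graph_F in_edge_rng_F parent_rng by (auto simp: wf_graph_def)

primrec walk :: "'a \<Rightarrow> 'e dedge list \<Rightarrow> 'a" where
  "walk w [] = w"
| "walk w (l # ls) = walk (rng F (out_edge w l)) ls"

lemma walk_snoc: "walk w (ls @ [l]) = rng F (out_edge (walk w ls) l)"
  by (induction ls arbitrary: w) auto

lemma walk_admissible_word:
  assumes "v \<in> verts F" "admissible_word E sp (in_label v # ys)"
  shows "walk v ys \<in> verts F \<and>
    (ys \<noteq> [] \<longrightarrow> in_label (walk v ys) = last ys \<and> parent (walk v ys) = walk v (butlast ys))"
  using assms(2)
proof (induction ys rule: rev_induct)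
  case Nil
  then show ?case
    using assms(1) by simp
next
  case (snoc l ys)
  then have ys: "admissible_word E sp (in_label v # ys)" "l \<in> edges (double_graph E)"
    "admissible_pair E sp (last (in_label v # ys)) l"
    using admissible_word_snoc[of "in_label v # ys" E sp l] by auto
  moreover have "walk v ys \<in> verts F" "in_label (walk v ys) = last (in_label v # ys)"
    using snoc.IH[OF ys(1)] by auto
  ultimately have "admissible_pair E sp (in_label (walk v ys)) l"
    by simp
  then show ?case
    using out_edge_target[OF \<open>walk v ys \<in> verts F\<close> ys(2)] by (simp add: walk_snoc)
qed

primrec path_labels :: "nat \<Rightarrow> 'a \<Rightarrow> 'e dedge list" where
  "path_labels 0 u = []"
| "path_labels (Suc k) u = path_labels k (parent u) @ [in_label u]"

lemma length_path_labels [simp]: "length (path_labels k u) = k"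
  by (induction k arbitrary: u) auto

lemma path_labels_Suc_Cons:
  "path_labels (Suc k) u = in_label ((parent ^^ k) u) # path_labels k u"
  by (induction k arbitrary: u) (simp_all add: funpow_Suc_right del: funpow.simps)

lemma walk_path_labels:
  "u \<in> verts F \<Longrightarrow> walk ((parent ^^ k) u) (path_labels k u) = u \<and>
     admissible_word E sp (in_label ((parent ^^ k) u) # path_labels k u)"
proof (induction k arbitrary: u)
  case 0
  then show ?case
    using in_label_admissible by simp
next
  case (Suc k)
  let ?w = "in_label ((parent ^^ k) (parent u)) # path_labels k (parent u)"
  have IH: "walk ((parent ^^ k) (parent u)) (path_labels k (parent u)) = parent u"
    "admissible_word E sp ?w"
    using Suc parent_in_verts by auto
  have "last ?w = in_label (parent u)"
    unfolding path_labels_Suc_Cons[symmetric] by simp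
  then have "admissible_word E sp (?w @ [in_label u])"
    using IH(2) in_label_admissible[OF Suc.prems] admissible_word_snoc[of ?w E sp] by simp
  moreover have "out_edge (parent u) (in_label u) = in_edge F u"
    using out_edge_label[OF in_edge_F(1)[OF Suc.prems]] by (simp add: parent_def)
  ultimately show ?case
    using IH(1) in_edge_F(2)[OF Suc.prems]
    by (simp add: walk_snoc funpow_Suc_right del: funpow.simps)
qed

lemma path_labels_walk:
  assumes "v \<in> verts F" "admissible_word E sp (in_label v # ys)"
  shows "path_labels (length ys) (walk v ys) = ys \<and> (parent ^^ length ys) (walk v ys) = v"
  using assms(2)
proof (induction ys rule: rev_induct)
  case (snoc l ys)
  then have "admissible_word E sp (in_label v # ys)"
    using admissible_word_snoc[of "in_label v # ys" E sp l] by auto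
  then show ?case
    using snoc walk_admissible_word[OF assms(1) snoc.prems]
    by (simp add: funpow_Suc_right del: funpow.simps)
qed simp

end

section \<open>The spine of an acyclic connected representation graph\<close>

locale sourceless_rep_tree = sourceless_rep_graph E sp F \<phi>v \<phi>e
  for E :: "('v,'e) dgraph" and sp :: "'v \<Rightarrow> 'e"
    and F :: "('a,'b) dgraph" and \<phi>v :: "'a \<Rightarrow> 'v" and \<phi>e :: "'b \<Rightarrow> 'e dedge" +
  assumes acyclic: "acyclic_graph F"
    and connected: "connected_graph F"
    and nonempty: "verts F \<noteq> {}"
begin

lemma parent_edge_rel: "w \<in> verts F \<Longrightarrow> (parent w, w) \<in> edge_rel F"
  using in_edge_F unfolding edge_rel_def parent_def by force

lemma funpow_parent_trancl: "w \<in> verts F \<Longrightarrow> ((parent ^^ Suc k) w, w) \<in> (edge_rel F)\<^sup>+"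
proof (induction k)
  case (Suc k)
  then show ?case
    using parent_edge_rel[OF funpow_parent_in_verts[of w "Suc k"]]
    by (simp del: funpow.simps add: funpow.simps(2)[of "Suc k"] trancl_into_trancl2)
qed (simp add: parent_edge_rel r_into_trancl')

lemma funpow_parent_neq: "w \<in> verts F \<Longrightarrow> 0 < k \<Longrightarrow> (parent ^^ k) w \<noteq> w"
  using funpow_parent_trancl[of w "k - 1"] acyclic
  by (auto simp: acyclic_graph_def acyclic_def)

definition spine :: "nat \<Rightarrow> 'a" where
  "spine n = (parent ^^ n) (SOME w. w \<in> verts F)"

lemma spine_in_verts: "spine n \<in> verts F"
  using nonempty funpow_parent_in_verts by (simp add: spine_def some_in_eq)

lemma funpow_parent_spine: "(parent ^^ k) (spine n) = spine (n + k)"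
  by (simp add: spine_def funpow_add add.commute)

lemma spine_Suc: "spine (Suc n) = parent (spine n)"
  by (simp add: spine_def)

lemma spine_eq_iff [simp]: "spine m = spine n \<longleftrightarrow> m = n"
proof
  have False if "i < j" "spine i = spine j" for i j
    using funpow_parent_neq[OF spine_in_verts, of "j - i" i] funpow_parent_spine[of "j - i" i] that
    by simp
  then show "spine m = spine n \<Longrightarrow> m = n"
    by (metis linorder_neqE_nat)
qed simp

lemma ancestor_on_spine:
  assumes "u \<in> verts F"
  shows "\<exists>k m. (parent ^^ k) u = spine m"
proof -
  have "(spine 0, u) \<in> (edge_rel F \<union> (edge_rel F)\<inverse>)\<^sup>*"
    using connected spine_in_verts assms by (simp add: connected_graph_def)
  then show ?thesis
  proof (induction rule: rtrancl_induct)
    case base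
    show ?case
      by (metis funpow_0)
  next
    case (step y z)
    then obtain k m where km: "(parent ^^ k) y = spine m"
      by blast
    from step(2) consider (down) "parent z = y" | (up) "parent y = z"
      by (auto simp: edge_rel_def parent_rng)
    then show ?case
    proof cases
      case down
      then have "(parent ^^ Suc k) z = spine m"
        using km by (simp add: funpow_Suc_right del: funpow.simps)
      then show ?thesis
        by blast
    next
      case up
      show ?thesis
      proof (cases k)
        case 0
        then have "(parent ^^ 0) z = spine (Suc m)"
          using km up by (simp add: spine_Suc)
        then show ?thesis
          by blast
      next
        case (Suc k')
        then have "(parent ^^ k') z = spine m"
          using km up by (simp add: funpow_Suc_right del: funpow.simps)
        then show ?thesis
          by blast
      qed
    qed
  qed
qed

(* x_i labels the edge into w_i = spine (i - 1); the value at index 0 is irrelevant. *)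
definition spine_word :: "nat \<Rightarrow> 'e dedge" where
  "spine_word i = in_label (spine (i - 1))"

lemma spine_word_in_Xinf: "spine_word \<in> Xinf E sp"
proof (rule in_XinfI)
  fix i :: nat
  assume "1 \<le> i"
  then obtain j where "i = Suc j"
    by (cases i) auto
  then show "spine_word i \<in> edges (double_graph E) \<and>
      admissible_pair E sp (spine_word (Suc i)) (spine_word i)"
    using in_label_admissible[OF spine_in_verts, of j] by (simp add: spine_word_def spine_Suc)
qed

abbreviation Fx_spine :: "('e fx_vert, 'e fx_edge) dgraph" where
  "Fx_spine \<equiv> Fx E sp spine_word"

lemma walk_from_spine:
  assumes "1 \<le> i" "y \<in> Xi E sp spine_word i"
  defines "u \<equiv> walk (spine (i - 1)) y"
  shows "u \<in> verts F" "in_label u = last y" "parent u = walk (spine (i - 1)) (butlast y)"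
    and "path_labels (length y) u = y" "(parent ^^ length y) u = spine (i - 1)"
proof -
  have "y \<noteq> []" "admissible_word E sp (in_label (spine (i - 1)) # y)"
    using assms by (auto simp: Xi_iff spine_word_def)
  then show "u \<in> verts F" "in_label u = last y" "parent u = walk (spine (i - 1)) (butlast y)"
    and "path_labels (length y) u = y" "(parent ^^ length y) u = spine (i - 1)"
    using walk_admissible_word path_labels_walk spine_in_verts unfolding u_def by blast+
qed

lemma length_le_if_ancestor_on_spine:
  assumes i: "1 \<le> i" and y: "y \<in> Xi E sp spine_word i"
    and k: "(parent ^^ k) (walk (spine (i - 1)) y) = spine m"
  shows "length y \<le> k"
proof (rule ccontr)
  let ?u = "walk (spine (i - 1)) y"
  assume "\<not> length y \<le> k"
  then obtain n where n: "length y = Suc n" "k \<le> n"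
    by (cases "length y") auto
  have ancestor: "(parent ^^ j) ?u = spine (m + (j - k))" if "k \<le> j" for j
  proof -
    have "(parent ^^ j) ?u = (parent ^^ (j - k + k)) ?u"
      using that by simp
    also have "\<dots> = (parent ^^ (j - k)) ((parent ^^ k) ?u)"
      by (simp only: funpow_add o_apply)
    also have "\<dots> = spine (m + (j - k))"
      by (simp only: k funpow_parent_spine)
    finally show ?thesis .
  qed
  have "spine (i - 1) = spine (m + (Suc n - k))"
    using ancestor[of "Suc n"] walk_from_spine(5)[OF i y] n by simp
  then have "2 \<le> i" "i - 1 - 1 = m + (n - k)"
    using n(2) by auto
  have "hd y = in_label ((parent ^^ n) ?u)"
    using walk_from_spine(4)[OF i y] path_labels_Suc_Cons[of n ?u] n(1) by (metis list.sel(1))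
  also have "\<dots> = spine_word (i - 1)"
    using ancestor[of n] n(2) \<open>i - 1 - 1 = m + (n - k)\<close> by (simp add: spine_word_def)
  finally show False
    using y \<open>2 \<le> i\<close> by (simp add: Xi_iff)
qed

lemma walk_from_spine_neq_spine:
  "1 \<le> i \<Longrightarrow> y \<in> Xi E sp spine_word i \<Longrightarrow> walk (spine (i - 1)) y \<noteq> spine m"
  using length_le_if_ancestor_on_spine[of i y 0 m] by (auto simp: Xi_iff)

lemma walk_from_spine_inj:
  assumes i: "1 \<le> i" "y \<in> Xi E sp spine_word i" and j: "1 \<le> j" "z \<in> Xi E sp spine_word j"
    and eq: "walk (spine (i - 1)) y = walk (spine (j - 1)) z"
  shows "i = j \<and> y = z"
proof -
  have "(parent ^^ length z) (walk (spine (i - 1)) y) = spine (j - 1)"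
    using walk_from_spine(5)[OF j] eq by simp
  then have "length y \<le> length z"
    by (rule length_le_if_ancestor_on_spine[OF i])
  moreover have "(parent ^^ length y) (walk (spine (j - 1)) z) = spine (i - 1)"
    using walk_from_spine(5)[OF i] eq by simp
  then have "length z \<le> length y"
    by (rule length_le_if_ancestor_on_spine[OF j])
  ultimately have same_length: "length y = length z"
    by simp
  have "y = path_labels (length y) (walk (spine (i - 1)) y)"
    by (rule walk_from_spine(4)[OF i, symmetric])
  also have "\<dots> = path_labels (length z) (walk (spine (j - 1)) z)"
    by (simp only: same_length eq)
  also have "\<dots> = z"
    by (rule walk_from_spine(4)[OF j])
  finally have "y = z" .
  have "spine (i - 1) = (parent ^^ length y) (walk (spine (i - 1)) y)"
    by (rule walk_from_spine(5)[OF i, symmetric])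
  also have "\<dots> = (parent ^^ length z) (walk (spine (j - 1)) z)"
    by (simp only: same_length eq)
  also have "\<dots> = spine (j - 1)"
    by (rule walk_from_spine(5)[OF j])
  finally have "i = j"
    using i(1) j(1) by simp
  with \<open>y = z\<close> show ?thesis
    by simp
qed

definition vertex_of :: "'e fx_vert \<Rightarrow> 'a" where
  "vertex_of w = (case w of W i \<Rightarrow> spine (i - 1) | WY i y \<Rightarrow> walk (spine (i - 1)) y)"

lemma vertex_of_in_verts: "w \<in> verts Fx_spine \<Longrightarrow> vertex_of w \<in> verts F"
  using spine_in_verts walk_from_spine(1) by (cases w) (auto simp: vertex_of_def)

lemma inj_on_vertex_of: "inj_on vertex_of (verts Fx_spine)"
proof (rule inj_onI)
  fix a b
  assume a: "a \<in> verts Fx_spine" and b: "b \<in> verts Fx_spine" and eq: "vertex_of a = vertex_of b"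
  show "a = b"
  proof (cases a; cases b)
    fix i j
    assume "a = W i" "b = W j"
    then show ?thesis
      using a b eq by (simp add: vertex_of_def)
  next
    fix i j z
    assume "a = W i" "b = WY j z"
    then show ?thesis
      using b eq walk_from_spine_neq_spine[of j z "i - 1"] by (simp add: vertex_of_def)
  next
    fix i y j
    assume "a = WY i y" "b = W j"
    then show ?thesis
      using a eq walk_from_spine_neq_spine[of i y "j - 1"] by (simp add: vertex_of_def)
  next
    fix i y j z
    assume "a = WY i y" "b = WY j z"
    then show ?thesis
      using a b eq walk_from_spine_inj[of i y j z] by (simp add: vertex_of_def)
  qed
qed

lemma vertex_of_surj:
  assumes u: "u \<in> verts F"
  shows "u \<in> vertex_of ` verts Fx_spine"
proof -
  define depth where "depth = (LEAST k. \<exists>m. (parent ^^ k) u = spine m)"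
  obtain m where m: "(parent ^^ depth) u = spine m"
    using LeastI_ex[OF ancestor_on_spine[OF u]] unfolding depth_def by blast
  have min: "\<not> (\<exists>m'. (parent ^^ k) u = spine m')" if "k < depth" for k
    using not_less_Least that unfolding depth_def by blast
  show ?thesis
  proof (cases depth)
    case 0
    then have "vertex_of (W (Suc m)) = u"
      using m by (simp add: vertex_of_def)
    then show ?thesis
      by force
  next
    case (Suc k)
    let ?y = "path_labels depth u"
    have walk: "walk (spine m) ?y = u" "admissible_word E sp (in_label (spine m) # ?y)"
      using walk_path_labels[OF u, of depth] m by auto
    have "hd ?y \<noteq> in_label (spine (m - 1))" if "1 \<le> m"
    proof
      assume "hd ?y = in_label (spine (m - 1))"
      moreover have "parent ((parent ^^ k) u) = parent (spine (m - 1))"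
        using m Suc that by (simp add: spine_Suc[symmetric])
      moreover have "hd ?y = in_label ((parent ^^ k) u)"
        unfolding Suc path_labels_Suc_Cons by simp
      ultimately have "(parent ^^ k) u = spine (m - 1)"
        using eq_if_parent_eq_in_label_eq[OF funpow_parent_in_verts[OF u] spine_in_verts] by simp
      then show False
        using min[of k] Suc by blast
    qed
    then have "?y \<in> Xi E sp spine_word (Suc m)"
      using walk(2) Suc by (auto simp: Xi_iff spine_word_def)
    then show ?thesis
      using walk(1) by (intro image_eqI[of _ _ "WY (Suc m) ?y"]) (simp_all add: vertex_of_def)
  qed
qed

lemma bij_betw_vertex_of: "bij_betw vertex_of (verts Fx_spine) (verts F)"
  using inj_on_vertex_of vertex_of_in_verts vertex_of_surj by (auto simp: bij_betw_def)

lemma parent_vertex_of_rng: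
  assumes "f \<in> edges Fx_spine"
  shows "parent (vertex_of (rng Fx_spine f)) = vertex_of (src Fx_spine f)"
proof (cases f)
  case (FE i)
  then show ?thesis
    using assms spine_Suc[of "i - 1"] by (simp add: vertex_of_def)
next
  case (FEY i y)
  moreover have "butlast y = []" if "length y = 1"
    using that by (simp add: butlast_conv_take)
  ultimately show ?thesis
    using assms walk_from_spine(3) by (simp add: vertex_of_def)
qed

lemma phi_vertex_of:
  assumes "w \<in> verts Fx_spine"
  shows "\<phi>v (vertex_of w) = phiVx E spine_word w"
proof (cases w)
  case (W i)
  then show ?thesis
    using rng_in_label[OF spine_in_verts] by (simp add: vertex_of_def phiVx_def spine_word_def)
next
  case (WY i y)
  with assms have "1 \<le> i" "y \<in> Xi E sp spine_word i"
    by auto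
  then show ?thesis
    using rng_in_label[OF walk_from_spine(1)] walk_from_spine(2) WY
    by (simp add: vertex_of_def phiVx_def)
qed

lemma in_label_vertex_of_rng:
  "f \<in> edges Fx_spine \<Longrightarrow> in_label (vertex_of (rng Fx_spine f)) = phiEx spine_word f"
  using walk_from_spine(2) by (cases f) (auto simp: vertex_of_def phiEx_def spine_word_def)

theorem rep_iso_Fx_spine_word:
  "rep_iso F \<phi>v \<phi>e Fx_spine (phiVx E spine_word) (phiEx spine_word)"
  by (rule rep_iso_if_vertex_bij[OF wf_graph_Fx in_degree_one_Fx wf_graph_F in_degree_one_F
        bij_betw_vertex_of])
    (simp_all add: parent_vertex_of_rng[unfolded parent_def] phi_vertex_of in_label_vertex_of_rng)

end

theorem proposition5p11:
  fixes E :: "('v,'e) dgraph" and sp :: "'v \<Rightarrow> 'e"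
    and F :: "('a,'b) dgraph" and \<phi>v :: "'a \<Rightarrow> 'v" and \<phi>e :: "'b \<Rightarrow> 'e dedge"
  assumes "row_finite_graph E"
    and "special_choice E sp"
    and "ext_rep_graph E sp F \<phi>v \<phi>e"
    and "verts F \<noteq> {}"
    and "acyclic_graph F"
    and "connected_graph F"
    and "\<forall>w\<in>verts F. \<not> is_source F w"
  shows "\<exists>x\<in>Xinf E sp. rep_iso F \<phi>v \<phi>e (Fx E sp x) (phiVx E x) (phiEx x)"
proof -
  interpret sourceless_rep_tree E sp F \<phi>v \<phi>e
    using assms by unfold_locales
  show ?thesis
    using spine_word_in_Xinf rep_iso_Fx_spine_word by blast
qed

end
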